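(* Let $G$ and $H$ be graphs. If there is a non-trivial graph $K$ such that $K\mid G$ and $K\mid H$, then $G$ and $H$ are not weakly disjoint.
   Context: A weight function on finite $U$ is $\alpha:U\times U\to\mathbb{R}$, $\alpha\ge0$, symmetric, summing to $1$; degree $p(u)=\sum_{u'}\alpha(u,u')$; a graph is $(U,\alpha)$; it is non-trivial if at least two vertices have positive degree. For graphs $G=(U,\alpha)$, $H=(V,\beta)$ with degrees $p,q$, $H\mid G$ means there is a surjective $\phi:U\to V$ with (i) $q(v)=\sum_{u\in\phi^{-1}(v)}p(u)$ for all $v$, and (ii) $q(v)\sum_{u'\in\phi^{-1}(v')}\alpha(u,u')=p(u)\beta(v,v')$ for all $v,v'$, $u\in\phi^{-1}(v)$. A weight joining of $\alpha,\beta$ is a weight function $\gamma$ on $U\times V$ with degree $r(u,v)=\sum_{(u',v')}\gamma((u,v),(u',v'))$ such that $\sum_v r(u,v)=p(u)$, $\sum_u r(u,v)=q(v)$, $p(u)\sum_{\tilde v}\gamma((u,v),(u',\tilde v))=\alpha(u,u')r(u,v)$ and $q(v)\sum_{\tilde u}\gamma((u,v),(\tilde u,v'))=\beta(v,v')r(u,v)$. $G,H$ are weakly disjoint if every weight joining has degree $r(u,v)=p(u)q(v)$. *)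

theory Defs
  imports Complex_Main
begin

text \<open>Graphs on a finite vertex set are modelled with vertex set = UNIV of a finite type.\<close>

definition weight_fun :: "('a::finite \<Rightarrow> 'a \<Rightarrow> real) \<Rightarrow> bool" where
  "weight_fun \<alpha> \<longleftrightarrow> (\<forall>u v. 0 \<le> \<alpha> u v) \<and> (\<forall>u v. \<alpha> u v = \<alpha> v u)
     \<and> (\<Sum>u\<in>UNIV. \<Sum>v\<in>UNIV. \<alpha> u v) = 1"

definition deg :: "('a::finite \<Rightarrow> 'a \<Rightarrow> real) \<Rightarrow> 'a \<Rightarrow> real" where
  "deg \<alpha> u = (\<Sum>u'\<in>UNIV. \<alpha> u u')"

definition nontrivial_graph :: "('a::finite \<Rightarrow> 'a \<Rightarrow> real) \<Rightarrow> bool" where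
  "nontrivial_graph \<alpha> \<longleftrightarrow> (\<exists>u1 u2. u1 \<noteq> u2 \<and> 0 < deg \<alpha> u1 \<and> 0 < deg \<alpha> u2)"

text \<open>graph_divides beta alpha means H | G where H = (V, beta), G = (U, alpha).\<close>
definition graph_divides :: "('b::finite \<Rightarrow> 'b \<Rightarrow> real) \<Rightarrow> ('a::finite \<Rightarrow> 'a \<Rightarrow> real) \<Rightarrow> bool" where
  "graph_divides \<beta> \<alpha> \<longleftrightarrow> (\<exists>\<phi> :: 'a \<Rightarrow> 'b. surj \<phi>
     \<and> (\<forall>v. deg \<beta> v = (\<Sum>u\<in>\<phi> -` {v}. deg \<alpha> u))
     \<and> (\<forall>v v' u. \<phi> u = v \<longrightarrow>
          deg \<beta> v * (\<Sum>u'\<in>\<phi> -` {v'}. \<alpha> u u') = deg \<alpha> u * \<beta> v v'))"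

definition weight_joining ::
  "('a::finite \<Rightarrow> 'a \<Rightarrow> real) \<Rightarrow> ('b::finite \<Rightarrow> 'b \<Rightarrow> real)
   \<Rightarrow> ('a \<times> 'b \<Rightarrow> 'a \<times> 'b \<Rightarrow> real) \<Rightarrow> bool" where
  "weight_joining \<alpha> \<beta> \<gamma> \<longleftrightarrow> weight_fun \<gamma>
     \<and> (\<forall>u. (\<Sum>v\<in>UNIV. deg \<gamma> (u, v)) = deg \<alpha> u)
     \<and> (\<forall>v. (\<Sum>u\<in>UNIV. deg \<gamma> (u, v)) = deg \<beta> v)
     \<and> (\<forall>u v u'. deg \<alpha> u * (\<Sum>v'\<in>UNIV. \<gamma> (u, v) (u', v')) = \<alpha> u u' * deg \<gamma> (u, v))
     \<and> (\<forall>u v v'. deg \<beta> v * (\<Sum>u'\<in>UNIV. \<gamma> (u, v) (u', v')) = \<beta> v v' * deg \<gamma> (u, v))"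

definition weakly_disjoint :: "('a::finite \<Rightarrow> 'a \<Rightarrow> real) \<Rightarrow> ('b::finite \<Rightarrow> 'b \<Rightarrow> real) \<Rightarrow> bool" where
  "weakly_disjoint \<alpha> \<beta> \<longleftrightarrow> (\<forall>\<gamma>. weight_joining \<alpha> \<beta> \<gamma> \<longrightarrow>
     (\<forall>u v. deg \<gamma> (u, v) = deg \<alpha> u * deg \<beta> v))"

end

theory Submission
  imports Defs
begin

text \<open>
  If \<open>\<phi> : G \<rightarrow> K\<close> and \<open>\<psi> : H \<rightarrow> K\<close> witness \<open>K | G\<close> and \<open>K | H\<close>, the relative product of
  \<open>\<alpha>\<close> and \<open>\<beta>\<close> over \<open>\<kappa>\<close>, namely \<open>\<alpha>(u,u') \<beta>(v,v') / \<kappa>(\<phi> u, \<phi> u')\<close> on the fibre product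
  \<open>\<phi> u = \<psi> v\<close>, \<open>\<phi> u' = \<psi> v'\<close> and \<open>0\<close> elsewhere, is a weight joining. Its degree is
  \<open>p(u) q(v) / s(\<phi> u)\<close> on the fibre product, \<open>s\<close> being the degree of \<open>\<kappa>\<close>, and \<open>0\<close> off it.
  Since \<open>K\<close> is non-trivial, there are vertices \<open>u\<close>, \<open>v\<close> of positive degree with
  \<open>\<phi> u \<noteq> \<psi> v\<close>, and there this degree differs from \<open>p(u) q(v)\<close>.
\<close>

definition factor_map :: "('c::finite \<Rightarrow> 'c \<Rightarrow> real) \<Rightarrow> ('a::finite \<Rightarrow> 'a \<Rightarrow> real) \<Rightarrow> ('a \<Rightarrow> 'c) \<Rightarrow> bool" where
  "factor_map \<kappa> \<alpha> \<phi> \<longleftrightarrow> (\<forall>w. deg \<kappa> w = (\<Sum>u\<in>\<phi> -` {w}. deg \<alpha> u))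
     \<and> (\<forall>w u. deg \<kappa> (\<phi> u) * (\<Sum>u'\<in>\<phi> -` {w}. \<alpha> u u') = deg \<alpha> u * \<kappa> (\<phi> u) w)"

lemma graph_divides_obtains_factor_map:
  assumes "graph_divides \<kappa> \<alpha>"
  obtains \<phi> where "factor_map \<kappa> \<alpha> \<phi>"
  using assms unfolding graph_divides_def factor_map_def by blast

lemma factor_map_deg:
  "factor_map \<kappa> \<alpha> \<phi> \<Longrightarrow> deg \<kappa> w = (\<Sum>u\<in>\<phi> -` {w}. deg \<alpha> u)"
  unfolding factor_map_def by blast

lemma factor_map_fibre_weight:
  "factor_map \<kappa> \<alpha> \<phi> \<Longrightarrow>
     deg \<kappa> (\<phi> u) * (\<Sum>u'\<in>\<phi> -` {w}. \<alpha> u u') = deg \<alpha> u * \<kappa> (\<phi> u) w"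
  unfolding factor_map_def by blast

lemma sum_UNIV_prod:
  "(\<Sum>x\<in>UNIV. f x) = (\<Sum>u\<in>UNIV. \<Sum>v\<in>UNIV. f (u, v))"
  by (simp add: sum.cartesian_product)

lemma deg_nonneg: "(\<And>u u'. 0 \<le> \<alpha> u u') \<Longrightarrow> 0 \<le> deg \<alpha> u"
  unfolding deg_def by (simp add: sum_nonneg)

lemma weight_eq_0_if_deg_eq_0:
  assumes "\<And>u u'. 0 \<le> \<alpha> u u'" and "deg \<alpha> u = 0"
  shows "\<alpha> u u' = 0"
  using assms sum_nonneg_eq_0_iff[of UNIV "\<alpha> u"] unfolding deg_def by simp

lemma factor_map_deg_eq_0:
  assumes nonneg: "\<And>u u'. 0 \<le> \<alpha> u u'" and \<phi>: "factor_map \<kappa> \<alpha> \<phi>"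
    and "deg \<kappa> (\<phi> u) = 0"
  shows "deg \<alpha> u = 0"
proof -
  have "(\<Sum>x\<in>\<phi> -` {\<phi> u}. deg \<alpha> x) = 0"
    using assms(3) factor_map_deg[OF \<phi>, of "\<phi> u"] by simp
  moreover have "0 \<le> deg \<alpha> x" for x
    using deg_nonneg[of \<alpha>] nonneg by blast
  ultimately show ?thesis
    using sum_nonneg_eq_0_iff[of "\<phi> -` {\<phi> u}" "deg \<alpha>"] by simp
qed

text \<open>No hypothesis on \<open>deg \<kappa> (\<phi> u)\<close> is needed: if it is \<open>0\<close>, so is \<open>deg \<alpha> u\<close>,
  and both sides vanish since \<open>x / 0 = 0\<close>.\<close>

lemma factor_map_fibre_sum:
  assumes nonneg: "\<And>u u'. 0 \<le> \<alpha> u u'" and \<phi>: "factor_map \<kappa> \<alpha> \<phi>"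
  shows "(\<Sum>u'\<in>\<phi> -` {w}. \<alpha> u u') = deg \<alpha> u * \<kappa> (\<phi> u) w / deg \<kappa> (\<phi> u)"
proof (cases "deg \<kappa> (\<phi> u) = 0")
  case True
  then have "\<alpha> u u' = 0" for u'
    using factor_map_deg_eq_0[OF nonneg \<phi>] weight_eq_0_if_deg_eq_0[of \<alpha>] nonneg by blast
  with True show ?thesis by simp
next
  case False
  then show ?thesis
    using factor_map_fibre_weight[OF \<phi>, of u w] by (simp add: field_simps)
qed

lemma factor_map_weight_eq_0:
  assumes nonneg: "\<And>u u'. 0 \<le> \<alpha> u u'" and \<phi>: "factor_map \<kappa> \<alpha> \<phi>"
    and "\<kappa> (\<phi> u) (\<phi> u') = 0"
  shows "\<alpha> u u' = 0"
proof -
  have "(\<Sum>x\<in>\<phi> -` {\<phi> u'}. \<alpha> u x) = 0"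
    using assms factor_map_fibre_sum[OF nonneg \<phi>] by simp
  then show ?thesis
    using sum_nonneg_eq_0_iff[of "\<phi> -` {\<phi> u'}" "\<alpha> u"] nonneg by simp
qed

lemma factor_map_obtains_deg_pos:
  assumes nonneg: "\<And>u u'. 0 \<le> \<alpha> u u'" and \<phi>: "factor_map \<kappa> \<alpha> \<phi>"
    and "0 < deg \<kappa> w"
  obtains u where "\<phi> u = w" and "0 < deg \<alpha> u"
proof -
  have "(\<Sum>u\<in>\<phi> -` {w}. deg \<alpha> u) \<noteq> 0"
    using assms(3) factor_map_deg[OF \<phi>, of w] by simp
  then obtain u where "u \<in> \<phi> -` {w}" and "deg \<alpha> u \<noteq> 0"
    by (rule sum.not_neutral_contains_not_neutral)
  moreover have "0 \<le> deg \<alpha> u"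
    using deg_nonneg[of \<alpha>] nonneg by blast
  ultimately show ?thesis
    using that[of u] by simp
qed

definition relative_joining ::
  "('c \<Rightarrow> 'c \<Rightarrow> real) \<Rightarrow> ('a \<Rightarrow> 'a \<Rightarrow> real) \<Rightarrow> ('b \<Rightarrow> 'b \<Rightarrow> real) \<Rightarrow> ('a \<Rightarrow> 'c) \<Rightarrow> ('b \<Rightarrow> 'c)
   \<Rightarrow> 'a \<times> 'b \<Rightarrow> 'a \<times> 'b \<Rightarrow> real" where
  "relative_joining \<kappa> \<alpha> \<beta> \<phi> \<psi> = (\<lambda>(u, v) (u', v').
     if \<phi> u = \<psi> v \<and> \<phi> u' = \<psi> v' then \<alpha> u u' * \<beta> v v' / \<kappa> (\<phi> u) (\<phi> u') else 0)"

lemma relative_joining_apply: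
  "relative_joining \<kappa> \<alpha> \<beta> \<phi> \<psi> (u, v) (u', v') =
     (if \<phi> u = \<psi> v \<and> \<phi> u' = \<psi> v' then \<alpha> u u' * \<beta> v v' / \<kappa> (\<phi> u) (\<phi> u') else 0)"
  by (simp add: relative_joining_def)

lemma relative_joining_swap:
  "relative_joining \<kappa> \<alpha> \<beta> \<phi> \<psi> (u, v) (u', v') = relative_joining \<kappa> \<beta> \<alpha> \<psi> \<phi> (v, u) (v', u')"
  by (auto simp: relative_joining_apply)

context
  fixes \<alpha> :: "'a::finite \<Rightarrow> 'a \<Rightarrow> real" and \<beta> :: "'b::finite \<Rightarrow> 'b \<Rightarrow> real"
    and \<kappa> :: "'c::finite \<Rightarrow> 'c \<Rightarrow> real" and \<phi> :: "'a \<Rightarrow> 'c" and \<psi> :: "'b \<Rightarrow> 'c"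
  assumes nonneg_\<alpha>: "\<And>u u'. 0 \<le> \<alpha> u u'" and nonneg_\<beta>: "\<And>v v'. 0 \<le> \<beta> v v'"
    and \<phi>: "factor_map \<kappa> \<alpha> \<phi>" and \<psi>: "factor_map \<kappa> \<beta> \<psi>"
begin

lemma relative_joining_sum_snd:
  "(\<Sum>v'\<in>UNIV. relative_joining \<kappa> \<alpha> \<beta> \<phi> \<psi> (u, v) (u', v')) =
     (if \<phi> u = \<psi> v then \<alpha> u u' * deg \<beta> v / deg \<kappa> (\<phi> u) else 0)"
proof (cases "\<phi> u = \<psi> v")
  case fibre: True
  have "(\<Sum>v'\<in>UNIV. relative_joining \<kappa> \<alpha> \<beta> \<phi> \<psi> (u, v) (u', v'))
      = (\<Sum>v'\<in>\<psi> -` {\<phi> u'}. \<alpha> u u' * \<beta> v v' / \<kappa> (\<phi> u) (\<phi> u'))"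
    using fibre by (simp add: relative_joining_apply sum.If_cases vimage_def eq_commute)
  also have "\<dots> = \<alpha> u u' / \<kappa> (\<phi> u) (\<phi> u') * (\<Sum>v'\<in>\<psi> -` {\<phi> u'}. \<beta> v v')"
    by (simp add: sum_distrib_left)
  also have "\<dots> = \<alpha> u u' / \<kappa> (\<phi> u) (\<phi> u') * (deg \<beta> v * \<kappa> (\<phi> u) (\<phi> u') / deg \<kappa> (\<phi> u))"
    using factor_map_fibre_sum[OF nonneg_\<beta> \<psi>, of v "\<phi> u'"] fibre by simp
  also have "\<dots> = \<alpha> u u' * deg \<beta> v / deg \<kappa> (\<phi> u)"
    using factor_map_weight_eq_0[OF nonneg_\<alpha> \<phi>, of u u'] by (cases "\<alpha> u u' = 0") auto
  finally show ?thesis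
    using fibre by simp
qed (simp add: relative_joining_apply)

lemma deg_relative_joining:
  "deg (relative_joining \<kappa> \<alpha> \<beta> \<phi> \<psi>) (u, v) =
     (if \<phi> u = \<psi> v then deg \<alpha> u * deg \<beta> v / deg \<kappa> (\<phi> u) else 0)"
proof -
  have "deg (relative_joining \<kappa> \<alpha> \<beta> \<phi> \<psi>) (u, v)
      = (\<Sum>u'\<in>UNIV. if \<phi> u = \<psi> v then \<alpha> u u' * deg \<beta> v / deg \<kappa> (\<phi> u) else 0)"
    unfolding deg_def[of "relative_joining \<kappa> \<alpha> \<beta> \<phi> \<psi>"]
      sum_UNIV_prod[where f = "relative_joining \<kappa> \<alpha> \<beta> \<phi> \<psi> (u, v)"]
    by (simp only: relative_joining_sum_snd)
  then show ?thesis
    by (simp add: deg_def[of \<alpha>] sum_distrib_right sum_divide_distrib)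
qed

lemma relative_joining_marginal_fst:
  "(\<Sum>v\<in>UNIV. deg (relative_joining \<kappa> \<alpha> \<beta> \<phi> \<psi>) (u, v)) = deg \<alpha> u"
proof -
  have "(\<Sum>v\<in>UNIV. deg (relative_joining \<kappa> \<alpha> \<beta> \<phi> \<psi>) (u, v))
      = deg \<alpha> u / deg \<kappa> (\<phi> u) * (\<Sum>v\<in>\<psi> -` {\<phi> u}. deg \<beta> v)"
    by (simp add: deg_relative_joining sum.If_cases vimage_def eq_commute sum_distrib_left)
  also have "\<dots> = deg \<alpha> u / deg \<kappa> (\<phi> u) * deg \<kappa> (\<phi> u)"
    using factor_map_deg[OF \<psi>, of "\<phi> u"] by simp
  also have "\<dots> = deg \<alpha> u"
    using factor_map_deg_eq_0[OF nonneg_\<alpha> \<phi>, of u] by auto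
  finally show ?thesis .
qed

end

lemma deg_relative_joining_swap:
  assumes "\<And>u u'. 0 \<le> \<alpha> u u'" and "\<And>v v'. 0 \<le> \<beta> v v'"
    and "factor_map \<kappa> \<alpha> \<phi>" and "factor_map \<kappa> \<beta> \<psi>"
  shows "deg (relative_joining \<kappa> \<alpha> \<beta> \<phi> \<psi>) (u, v) = deg (relative_joining \<kappa> \<beta> \<alpha> \<psi> \<phi>) (v, u)"
  using deg_relative_joining[OF assms] deg_relative_joining[OF assms(2,1,4,3)] by simp

lemma relative_joining_is_weight_joining:
  assumes \<alpha>: "weight_fun \<alpha>" and \<beta>: "weight_fun \<beta>" and \<kappa>: "weight_fun \<kappa>"
    and \<phi>: "factor_map \<kappa> \<alpha> \<phi>" and \<psi>: "factor_map \<kappa> \<beta> \<psi>"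
  shows "weight_joining \<alpha> \<beta> (relative_joining \<kappa> \<alpha> \<beta> \<phi> \<psi>)"
proof -
  let ?\<gamma> = "relative_joining \<kappa> \<alpha> \<beta> \<phi> \<psi>"
  have nonneg_\<alpha>: "\<And>u u'. 0 \<le> \<alpha> u u'" and nonneg_\<beta>: "\<And>v v'. 0 \<le> \<beta> v v'"
    using \<alpha> \<beta> unfolding weight_fun_def by auto
  note facts = nonneg_\<alpha> nonneg_\<beta> \<phi> \<psi>
  note facts' = nonneg_\<beta> nonneg_\<alpha> \<psi> \<phi>
  have marginal_fst: "(\<Sum>v\<in>UNIV. deg ?\<gamma> (u, v)) = deg \<alpha> u" for u
    by (rule relative_joining_marginal_fst[OF facts])
  have marginal_snd: "(\<Sum>u\<in>UNIV. deg ?\<gamma> (u, v)) = deg \<beta> v" for v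
    using relative_joining_marginal_fst[OF facts', of v] deg_relative_joining_swap[OF facts] by simp
  have "weight_fun ?\<gamma>"
    unfolding weight_fun_def
  proof (intro conjI allI)
    show "0 \<le> ?\<gamma> x y" for x y
      using \<alpha> \<beta> \<kappa> unfolding weight_fun_def
      by (cases x; cases y) (simp add: relative_joining_apply)
    show "?\<gamma> x y = ?\<gamma> y x" for x y
      using \<alpha> \<beta> \<kappa> unfolding weight_fun_def
      by (cases x; cases y) (simp add: relative_joining_apply mult.commute)
    have "(\<Sum>x\<in>UNIV. \<Sum>y\<in>UNIV. ?\<gamma> x y) = (\<Sum>u\<in>UNIV. \<Sum>v\<in>UNIV. deg ?\<gamma> (u, v))"
      unfolding deg_def[symmetric] by (rule sum_UNIV_prod)
    also have "\<dots> = (\<Sum>u\<in>UNIV. deg \<alpha> u)"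
      by (simp only: marginal_fst)
    finally show "(\<Sum>x\<in>UNIV. \<Sum>y\<in>UNIV. ?\<gamma> x y) = 1"
      using \<alpha> unfolding weight_fun_def deg_def by simp
  qed
  moreover have "deg \<alpha> u * (\<Sum>v'\<in>UNIV. ?\<gamma> (u, v) (u', v')) = \<alpha> u u' * deg ?\<gamma> (u, v)" for u v u'
    by (simp add: relative_joining_sum_snd[OF facts] deg_relative_joining[OF facts])
  moreover have "deg \<beta> v * (\<Sum>u'\<in>UNIV. ?\<gamma> (u, v) (u', v')) = \<beta> v v' * deg ?\<gamma> (u, v)" for u v v'
    using relative_joining_sum_snd[OF facts', of v u v'] deg_relative_joining[OF facts', of v u]
    by (simp add: relative_joining_swap[of \<kappa> \<alpha> \<beta> \<phi> \<psi>] deg_relative_joining_swap[OF facts])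
  ultimately show ?thesis
    unfolding weight_joining_def using marginal_fst marginal_snd by blast
qed

theorem proposition4p7:
  fixes \<alpha> :: "'a::finite \<Rightarrow> 'a \<Rightarrow> real"
    and \<beta> :: "'b::finite \<Rightarrow> 'b \<Rightarrow> real"
    and \<kappa> :: "'c::finite \<Rightarrow> 'c \<Rightarrow> real"
  assumes "weight_fun \<alpha>" and "weight_fun \<beta>" and "weight_fun \<kappa>"
    and "nontrivial_graph \<kappa>"
    and "graph_divides \<kappa> \<alpha>" and "graph_divides \<kappa> \<beta>"
  shows "\<not> weakly_disjoint \<alpha> \<beta>"
proof
  assume disjoint: "weakly_disjoint \<alpha> \<beta>"
  obtain \<phi> \<psi> where \<phi>: "factor_map \<kappa> \<alpha> \<phi>" and \<psi>: "factor_map \<kappa> \<beta> \<psi>"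
    using assms(5,6) graph_divides_obtains_factor_map by metis
  have nonneg_\<alpha>: "\<And>u u'. 0 \<le> \<alpha> u u'" and nonneg_\<beta>: "\<And>v v'. 0 \<le> \<beta> v v'"
    using assms(1,2) unfolding weight_fun_def by auto
  obtain w1 w2 where "w1 \<noteq> w2" and w1: "0 < deg \<kappa> w1" and w2: "0 < deg \<kappa> w2"
    using assms(4) unfolding nontrivial_graph_def by blast
  obtain u where "\<phi> u = w1" "0 < deg \<alpha> u"
    using factor_map_obtains_deg_pos[OF nonneg_\<alpha> \<phi> w1] .
  moreover obtain v where "\<psi> v = w2" "0 < deg \<beta> v"
    using factor_map_obtains_deg_pos[OF nonneg_\<beta> \<psi> w2] .
  moreover have "deg (relative_joining \<kappa> \<alpha> \<beta> \<phi> \<psi>) (u, v) = deg \<alpha> u * deg \<beta> v"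
    using disjoint relative_joining_is_weight_joining[OF assms(1-3) \<phi> \<psi>]
    unfolding weakly_disjoint_def by blast
  ultimately show False
    using \<open>w1 \<noteq> w2\<close> deg_relative_joining[OF nonneg_\<alpha> nonneg_\<beta> \<phi> \<psi>, of u v] by simp
qed

end
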